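(* Let $A$ be as in Construction 1. For any $\delta\in(0,1)$ such that \[ 2\alpha^2+8T\log\!\left(\frac{2Tn}{\delta}\right)\beta^2\le 1, \] with probability at least $1-\delta$ (over $\boldsymbol{\xi}_1,\dots,\boldsymbol{\xi}_T$) it holds that $\max_{l\in[n]}\|A_l\|_2\le1$, where $A_l$ is the $l$-th row of $A$.
   Context: Construction 1: Fix an integer $T\ge1$ with $n\ge 2T+1$ and $d\ge 2T+2$, parameters $\alpha,\beta>0$, and a deterministic algorithm interacting with the two-sided oracle (on query $(\mathbf{p},\mathbf{w})\in\mathbb{R}^n\times\mathbb{R}^d$ it returns $A\mathbf{w}$ and $\mathbf{p}^\top A$); queries and the final output $\mathbf{w}_{T+1}$ are deterministic functions of previous responses. Let $\boldsymbol{\xi}_1,\dots,\boldsymbol{\xi}_T$ be i.i.d. standard Gaussian vectors in $\mathbb{R}^n$. Set $\mathbf{v}_0=\alpha\mathbf{1}$. For $t=1,\dots,T$: let $(\mathbf{p}_t,\mathbf{w}_t)$ be the algorithm's query; let $\mathbf{u}_t\in\mathbb{R}^d$ be a unit vector orthogonal to $\mathbf{u}_1,\dots,\mathbf{u}_{t-1},\mathbf{w}_1,\dots,\mathbf{w}_t$; let $\mathbf{v}_t=\beta(I-M_tM_t^\top)\boldsymbol{\xi}_t$ where $M_t$ has at most $2t$ orthonormal columns spanning $\mathrm{span}(\mathbf{v}_0,\dots,\mathbf{v}_{t-1},\mathbf{p}_1,\dots,\mathbf{p}_t)$; let $A_t=\sum_{j=1}^t(\mathbf{v}_{j-1}-\mathbf{v}_j)\mathbf{u}_j^\top$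 and feed the algorithm $\mathbf{p}_t^\top A_t$, $A_t\mathbf{w}_t$. After round $T$, let $\mathbf{w}_{T+1}$ be the output and $\mathbf{u}_{T+1}$ a unit vector orthogonal to $\mathbf{u}_1,\dots,\mathbf{u}_T,\mathbf{w}_1,\dots,\mathbf{w}_{T+1}$. Define $A=\sum_{j=1}^T(\mathbf{v}_{j-1}-\mathbf{v}_j)\mathbf{u}_j^\top+\mathbf{v}_T\mathbf{u}_{T+1}^\top$. *)

theory Defs
  imports "HOL-Probability.Probability"
begin

definition std_gauss :: "('a::euclidean_space) measure" where
  "std_gauss = density lborel
     (\<lambda>x. ennreal ((2 * pi) powr (- real DIM('a) / 2) * exp (- (norm x)\<^sup>2 / 2)))"

definition outer :: "real^'n \<Rightarrow> real^'d \<Rightarrow> real^'d^'n" where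
  "outer v u = (\<chi> l k. v $ l * u $ k)"

text \<open>(I - M M^T) x, where M has columns given by the list ms.\<close>
definition proj_out :: "(real^'n) list \<Rightarrow> real^'n \<Rightarrow> real^'n" where
  "proj_out ms x = x - sum_list (map (\<lambda>m. (m \<bullet> x) *\<^sub>R m) ms)"

definition orthonormal_list :: "('a::real_inner) list \<Rightarrow> bool" where
  "orthonormal_list ms \<longleftrightarrow>
     (\<forall>i<length ms. \<forall>j<length ms. ms ! i \<bullet> ms ! j = (if i = j then 1 else 0))"

text \<open>A_t = sum_{j=1}^t (v_{j-1} - v_j) u_j^T, with vs = [v_0,...,v_t], us = [u_1,...,u_t].\<close>
definition Apart :: "(real^'n) list \<Rightarrow> (real^'d) list \<Rightarrow> nat \<Rightarrow> real^'d^'n" where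
  "Apart vs us t = (\<Sum>j\<in>{1..t}. outer (vs ! (j - 1) - vs ! j) (us ! (j - 1)))"

text \<open>State of Construction 1 after round t:
  us = [u_1..u_t], vs = [v_0..v_t], ps = [p_1..p_t], ws = [w_1..w_t],
  resp = [(p_1^T A_1, A_1 w_1), ..., (p_t^T A_t, A_t w_t)].\<close>
record ('n, 'd) cstate =
  cs_us :: "(real^'d) list"
  cs_vs :: "(real^'n) list"
  cs_ps :: "(real^'n) list"
  cs_ws :: "(real^'d) list"
  cs_resp :: "((real^'d) \<times> (real^'n)) list"

text \<open>Q: the deterministic algorithm's query as a function of the previous responses;
  Usel: the rule choosing u_t; Msel: the rule choosing the orthonormal columns of M_t;
  xi t: the Gaussian vector xi_t (t = 1..T).\<close>
primrec crun ::
  "(((real^'d) \<times> (real^'n)) list \<Rightarrow> (real^'n) \<times> (real^'d)) \<Rightarrow>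
   ((real^'d) list \<Rightarrow> real^'d) \<Rightarrow> ((real^'n) list \<Rightarrow> (real^'n) list) \<Rightarrow>
   real \<Rightarrow> real \<Rightarrow> (nat \<Rightarrow> real^'n) \<Rightarrow> nat \<Rightarrow> ('n, 'd) cstate" where
  "crun Q Usel Msel \<alpha> \<beta> xi 0 =
     \<lparr> cs_us = [], cs_vs = [\<alpha> *\<^sub>R 1], cs_ps = [], cs_ws = [], cs_resp = [] \<rparr>"
| "crun Q Usel Msel \<alpha> \<beta> xi (Suc t) =
     (let s = crun Q Usel Msel \<alpha> \<beta> xi t;
          p = fst (Q (cs_resp s));
          w = snd (Q (cs_resp s));
          u = Usel (cs_us s @ cs_ws s @ [w]);
          M = Msel (cs_vs s @ cs_ps s @ [p]);
          v = \<beta> *\<^sub>R proj_out M (xi (Suc t));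
          us' = cs_us s @ [u];
          vs' = cs_vs s @ [v];
          At = Apart vs' us' (Suc t)
      in \<lparr> cs_us = us', cs_vs = vs', cs_ps = cs_ps s @ [p], cs_ws = cs_ws s @ [w],
           cs_resp = cs_resp s @ [(p v* At, At *v w)] \<rparr>)"

text \<open>The final matrix A = sum_{j=1}^T (v_{j-1} - v_j) u_j^T + v_T u_{T+1}^T,
  where Out is the algorithm's output map (giving w_{T+1}).\<close>
definition final_A ::
  "(((real^'d) \<times> (real^'n)) list \<Rightarrow> (real^'n) \<times> (real^'d)) \<Rightarrow>
   (((real^'d) \<times> (real^'n)) list \<Rightarrow> real^'d) \<Rightarrow>
   ((real^'d) list \<Rightarrow> real^'d) \<Rightarrow> ((real^'n) list \<Rightarrow> (real^'n) list) \<Rightarrow>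
   real \<Rightarrow> real \<Rightarrow> nat \<Rightarrow> (nat \<Rightarrow> real^'n) \<Rightarrow> real^'d^'n" where
  "final_A Q Out Usel Msel \<alpha> \<beta> T xi =
     (let s = crun Q Usel Msel \<alpha> \<beta> xi T;
          w = Out (cs_resp s);
          u = Usel (cs_us s @ cs_ws s @ [w])
      in Apart (cs_vs s) (cs_us s) T + outer (cs_vs s ! T) u)"

end

theory Submission
  imports Defs
begin

text \<open>
  Each row of \<open>A\<close> has squared norm \<open>\<Sum>\<^sub>j (v\<^sub>j\<^sub>-\<^sub>1 l - v\<^sub>j l)\<^sup>2 + v\<^sub>T l\<^sup>2\<close>, because the
  \<open>u\<^sub>j\<close> are orthonormal; this is at most \<open>2\<alpha>\<^sup>2 + 4 \<Sum>\<^sub>t v\<^sub>t l\<^sup>2\<close>.  Conditionally on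
  \<open>\<xi>\<^sub>1, \<dots>, \<xi>\<^sub>t\<^sub>-\<^sub>1\<close>, the coordinate \<open>v\<^sub>t l\<close> is \<open>\<beta>\<close> times a linear functional of norm
  at most one of the fresh Gaussian \<open>\<xi>\<^sub>t\<close>, so it exceeds \<open>\<beta> r\<close> in absolute value with
  probability at most \<open>2 exp (-r\<^sup>2/2)\<close>.  A union bound over the \<open>T n\<close> pairs \<open>(t, l)\<close>
  with \<open>r\<^sup>2 = 2 log (2Tn/\<delta>)\<close> concludes.
\<close>

section \<open>The standard Gaussian measure\<close>

definition gauss_density :: "'a::euclidean_space \<Rightarrow> real" where
  "gauss_density x = (2 * pi) powr (- real DIM('a) / 2) * exp (- (norm x)\<^sup>2 / 2)"

lemma std_gauss_eq_density: "std_gauss = density lborel (\<lambda>x. ennreal (gauss_density x))"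
  by (simp add: std_gauss_def gauss_density_def)

lemma space_std_gauss [simp]: "space std_gauss = UNIV"
  by (simp add: std_gauss_def)

lemma sets_std_gauss [simp, measurable_cong]: "sets std_gauss = sets borel"
  by (simp add: std_gauss_def)

lemma gauss_density_nonneg: "gauss_density x \<ge> 0"
  by (simp add: gauss_density_def)

lemma gauss_density_measurable [measurable]: "gauss_density \<in> borel_measurable borel"
  unfolding gauss_density_def by measurable

lemma power_inverse_sqrt_2pi: "(1 / sqrt (2 * pi)) ^ n = (2 * pi) powr (- real n / 2)"
proof -
  have "(1 / sqrt (2 * pi)) ^ n = inverse (sqrt (2 * pi) ^ n)"
    by (simp add: power_inverse divide_inverse)
  also have "sqrt (2 * pi) ^ n = ((2 * pi) powr (1/2)) powr real n"
    by (simp add: powr_half_sqrt powr_realpow)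
  also have "inverse \<dots> = (2 * pi) powr (- real n / 2)"
    by (simp add: powr_powr powr_minus[symmetric])
  finally show ?thesis .
qed

lemma gauss_density_eq_prod:
  "gauss_density (x::'a::euclidean_space) = (\<Prod>b\<in>Basis. std_normal_density (x \<bullet> b))"
proof -
  have "(\<Prod>b\<in>Basis. std_normal_density (x \<bullet> b))
      = (\<Prod>b\<in>(Basis::'a set). (1 / sqrt (2 * pi)) * exp (- (x \<bullet> b)\<^sup>2 / 2))"
    by (simp add: std_normal_density_def)
  also have "\<dots> = (1 / sqrt (2 * pi)) ^ DIM('a) * exp (\<Sum>b\<in>(Basis::'a set). - (x \<bullet> b)\<^sup>2 / 2)"
    unfolding prod.distrib prod_constant by (simp add: exp_sum)
  also have "(\<Sum>b\<in>(Basis::'a set). - (x \<bullet> b)\<^sup>2 / 2) = - (norm x)\<^sup>2 / 2"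
    unfolding power2_norm_eq_inner euclidean_inner[of x x]
    by (simp add: power2_eq_square sum_negf sum_divide_distrib)
  finally show ?thesis
    by (simp add: gauss_density_def power_inverse_sqrt_2pi)
qed

lemma nn_integral_gauss_density: "(\<integral>\<^sup>+ x. gauss_density (x::'a::euclidean_space) \<partial>lborel) = 1"
proof -
  interpret product_sigma_finite "\<lambda>_::'a. lborel :: real measure" by standard
  have coord: "(\<Sum>b'\<in>Basis. f b' *\<^sub>R b' :: 'a) \<bullet> b = f b" if "b \<in> Basis" for f b
    using that by (simp add: inner_sum_left inner_Basis if_distrib cong: if_cong)
  have "(\<integral>\<^sup>+ x. gauss_density (x::'a) \<partial>lborel)
      = (\<integral>\<^sup>+ f. gauss_density (\<Sum>b\<in>Basis. f b *\<^sub>R b :: 'a) \<partial>(\<Pi>\<^sub>M b\<in>Basis. lborel))"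
    by (subst lborel_eq) (simp add: nn_integral_distr)
  also have "\<dots> = (\<integral>\<^sup>+ f. (\<Prod>b\<in>(Basis::'a set). ennreal (std_normal_density (f b)))
                      \<partial>(\<Pi>\<^sub>M b\<in>Basis. lborel))"
    by (intro nn_integral_cong)
      (simp add: gauss_density_eq_prod coord prod_ennreal cong: prod.cong)
  also have "\<dots> = (\<Prod>b\<in>(Basis::'a set). \<integral>\<^sup>+ y. ennreal (std_normal_density y) \<partial>lborel)"
    by (rule product_nn_integral_prod) auto
  also have "(\<integral>\<^sup>+ y. ennreal (std_normal_density y) \<partial>lborel) = 1"
    by (subst nn_integral_eq_integral) auto
  finally show ?thesis by simp
qed

lemma prob_space_std_gauss: "prob_space (std_gauss :: 'a::euclidean_space measure)"
  by (rule prob_spaceI) (simp add: std_gauss_eq_density emeasure_density nn_integral_gauss_density)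

lemma nn_integral_std_gauss_exp_inner:
  fixes c :: "'a::euclidean_space"
  shows "(\<integral>\<^sup>+ x. exp (c \<bullet> x) \<partial>std_gauss) = exp ((norm c)\<^sup>2 / 2)"
proof -
  \<comment> \<open>completing the square\<close>
  have shift: "gauss_density x * exp (c \<bullet> x) = exp ((norm c)\<^sup>2 / 2) * gauss_density (- c + x)" for x
  proof -
    have "(norm (- c + x))\<^sup>2 = (norm x)\<^sup>2 - 2 * (c \<bullet> x) + (norm c)\<^sup>2"
      by (simp add: power2_norm_eq_inner inner_simps inner_commute)
    then have "- (norm x)\<^sup>2 / 2 + c \<bullet> x = (norm c)\<^sup>2 / 2 + - (norm (- c + x))\<^sup>2 / 2"
      by (simp add: field_simps)
    then show ?thesis
      by (simp add: gauss_density_def mult_exp_exp algebra_simps)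
  qed
  have "(\<integral>\<^sup>+ x. exp (c \<bullet> x) \<partial>std_gauss)
      = (\<integral>\<^sup>+ x. ennreal (exp ((norm c)\<^sup>2 / 2)) * gauss_density (- c + x) \<partial>lborel)"
    by (simp add: std_gauss_eq_density nn_integral_density ennreal_mult'[symmetric]
        gauss_density_nonneg shift)
  also have "\<dots> = exp ((norm c)\<^sup>2 / 2) * (\<integral>\<^sup>+ x. gauss_density x \<partial>distr lborel borel ((+) (- c)))"
    by (subst nn_integral_cmult) (auto simp: nn_integral_distr)
  also have "\<dots> = exp ((norm c)\<^sup>2 / 2)"
    by (simp add: lborel_distr_plus nn_integral_gauss_density)
  finally show ?thesis .
qed

lemma std_gauss_inner_tail:
  fixes c :: "'a::euclidean_space"
  assumes "norm c \<le> 1" "r \<ge> 0"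
  shows "emeasure std_gauss {x. r \<le> c \<bullet> x} \<le> exp (- r\<^sup>2 / 2)"
proof -
  \<comment> \<open>Chernoff bound with exponent \<open>r\<close>\<close>
  have "emeasure std_gauss {x. r \<le> c \<bullet> x} = (\<integral>\<^sup>+ x. indicator {x. r \<le> c \<bullet> x} x \<partial>std_gauss)"
    by (subst nn_integral_indicator) auto
  also have "\<dots> \<le> (\<integral>\<^sup>+ x. ennreal (exp (- r\<^sup>2)) * exp ((r *\<^sub>R c) \<bullet> x) \<partial>std_gauss)"
  proof (intro nn_integral_mono)
    fix x
    have "r * r \<le> r * (c \<bullet> x)" if "r \<le> c \<bullet> x"
      using that assms by (intro mult_left_mono) auto
    then show "indicator {x. r \<le> c \<bullet> x} x \<le> ennreal (exp (- r\<^sup>2)) * exp ((r *\<^sub>R c) \<bullet> x)"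
      by (auto simp: indicator_def ennreal_mult'[symmetric] mult_exp_exp power2_eq_square)
  qed
  also have "\<dots> = ennreal (exp (- r\<^sup>2)) * exp ((norm (r *\<^sub>R c))\<^sup>2 / 2)"
    by (subst nn_integral_cmult) (simp_all only: nn_integral_std_gauss_exp_inner, measurable)
  also have "\<dots> \<le> exp (- r\<^sup>2 / 2)"
  proof -
    have "\<bar>r\<bar> * norm c \<le> \<bar>r\<bar>" using assms by (simp add: mult_left_le)
    then have "(norm (r *\<^sub>R c))\<^sup>2 \<le> r\<^sup>2"
      using power_mono[of "\<bar>r\<bar> * norm c" "\<bar>r\<bar>" 2] by simp
    then show ?thesis by (simp add: ennreal_mult'[symmetric] mult_exp_exp)
  qed
  finally show ?thesis .
qed

lemma std_gauss_abs_inner_tail: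
  fixes c :: "'a::euclidean_space"
  assumes "norm c \<le> 1" "r \<ge> 0"
  shows "emeasure std_gauss {x. r \<le> \<bar>c \<bullet> x\<bar>} \<le> 2 * exp (- r\<^sup>2 / 2)"
proof -
  have "{x. r \<le> \<bar>c \<bullet> x\<bar>} = {x. r \<le> c \<bullet> x} \<union> {x. r \<le> (- c) \<bullet> x}"
    by (auto simp: abs_if)
  then have "emeasure std_gauss {x. r \<le> \<bar>c \<bullet> x\<bar>}
      \<le> emeasure std_gauss {x. r \<le> c \<bullet> x} + emeasure std_gauss {x. r \<le> (- c) \<bullet> x}"
    by (auto intro: emeasure_subadditive)
  also have "\<dots> \<le> ennreal (exp (- r\<^sup>2 / 2)) + ennreal (exp (- r\<^sup>2 / 2))"
    using assms by (intro add_mono std_gauss_inner_tail) auto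
  finally show ?thesis
    by (simp add: ennreal_plus[symmetric] del: ennreal_plus)
qed

section \<open>Projections and orthonormal lists\<close>

lemma orthonormal_list_snoc:
  assumes "orthonormal_list L" "norm u = 1" "\<forall>x\<in>set L. x \<bullet> u = 0"
  shows "orthonormal_list (L @ [u])"
proof -
  have "u \<bullet> u = 1" using assms(2) by (simp add: norm_eq_sqrt_inner)
  then show ?thesis
    using assms(1,3) unfolding orthonormal_list_def
    by (auto simp: nth_append inner_commute less_Suc_eq)
qed

lemma norm_sum_orthonormal_list_sq:
  assumes "orthonormal_list E" "length E = m"
  shows "(norm (\<Sum>j<m. c j *\<^sub>R E ! j))\<^sup>2 = (\<Sum>j<m. (c j)\<^sup>2)"
proof -
  have "(norm (\<Sum>j<m. c j *\<^sub>R E ! j))\<^sup>2 = (\<Sum>i<m. \<Sum>j<m. c i * c j * (E ! j \<bullet> E ! i))"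
    by (simp add: power2_norm_eq_inner inner_sum_left inner_sum_right sum_distrib_left mult.assoc)
  also have "\<dots> = (\<Sum>i<m. \<Sum>j<m. if j = i then c i * c i else 0)"
    using assms by (intro sum.cong refl) (auto simp: orthonormal_list_def)
  also have "\<dots> = (\<Sum>j<m. (c j)\<^sup>2)" by (simp add: power2_eq_square)
  finally show ?thesis .
qed

lemma inner_proj_out_left:
  "proj_out ms x \<bullet> z = x \<bullet> z - (\<Sum>m\<leftarrow>ms. (m \<bullet> x) * (m \<bullet> z))"
  unfolding proj_out_def
  by (induction ms) (simp_all add: inner_diff_left inner_add_left algebra_simps)

lemma proj_out_self_adjoint: "proj_out ms x \<bullet> z = x \<bullet> proj_out ms z"
proof -
  have "x \<bullet> proj_out ms z = proj_out ms z \<bullet> x" by (rule inner_commute)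
  then show ?thesis by (simp add: inner_proj_out_left inner_commute[of x z] mult.commute)
qed

lemma inner_proj_out_orthonormal:
  assumes "orthonormal_list ms" "m \<in> set ms"
  shows "m \<bullet> proj_out ms x = 0"
proof -
  obtain k where k: "k < length ms" "m = ms ! k" using assms(2) by (auto simp: in_set_conv_nth)
  have "(\<Sum>m'\<leftarrow>ms. (m' \<bullet> x) * (m' \<bullet> m)) = (\<Sum>i<length ms. (ms ! i \<bullet> x) * (ms ! i \<bullet> ms ! k))"
    by (simp add: sum_list_sum_nth atLeast0LessThan k(2))
  also have "\<dots> = (\<Sum>i<length ms. if i = k then ms ! k \<bullet> x else 0)"
    using assms(1) k by (intro sum.cong refl) (auto simp: orthonormal_list_def)
  also have "\<dots> = x \<bullet> m" using k by (simp add: inner_commute)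
  finally show ?thesis
    by (subst inner_commute) (simp add: inner_proj_out_left)
qed

lemma norm_proj_out_le:
  assumes "orthonormal_list ms"
  shows "norm (proj_out ms x) \<le> norm x"
proof -
  let ?c = "proj_out ms x"
  have "(\<Sum>m\<leftarrow>ms. (m \<bullet> x) * (m \<bullet> ?c)) = 0"
    by (simp add: inner_proj_out_orthonormal[OF assms] cong: map_cong)
  then have "?c \<bullet> ?c = x \<bullet> ?c" by (simp add: inner_proj_out_left)
  also have "\<dots> = x \<bullet> x - (\<Sum>m\<leftarrow>ms. (m \<bullet> x) * (m \<bullet> x))"
    by (simp add: proj_out_self_adjoint[symmetric] inner_proj_out_left)
  also have "\<dots> \<le> x \<bullet> x"
    by (auto intro!: sum_list_nonneg)
  finally show ?thesis by (simp add: norm_eq_sqrt_inner)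
qed

lemma proj_out_component: "proj_out ms y $ l = proj_out ms (axis l 1) \<bullet> y"
proof -
  have "proj_out ms y $ l = proj_out ms y \<bullet> axis l 1"
    by (simp add: inner_axis)
  also have "\<dots> = y \<bullet> proj_out ms (axis l 1)"
    by (rule proj_out_self_adjoint)
  finally show ?thesis
    by (simp only: inner_commute)
qed

section \<open>The construction\<close>

lemma length_crun:
  "length (cs_us (crun Q Usel Msel a b xi t)) = t \<and>
   length (cs_vs (crun Q Usel Msel a b xi t)) = Suc t \<and>
   length (cs_ws (crun Q Usel Msel a b xi t)) = t"
  by (induction t) (simp_all add: Let_def)

lemma crun_vs_nth_stable:
  "k \<le> t \<Longrightarrow> cs_vs (crun Q Usel Msel a b xi t) ! k = cs_vs (crun Q Usel Msel a b xi k) ! k"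
proof (induction t)
  case (Suc t)
  then show ?case by (cases "k = Suc t") (auto simp: Let_def nth_append length_crun)
qed simp

lemma crun_cong:
  "(\<And>j. j \<in> {1..t} \<Longrightarrow> xi j = xi' j) \<Longrightarrow> crun Q Usel Msel a b xi t = crun Q Usel Msel a b xi' t"
  by (induction t) (simp_all add: Let_def)

lemma crun_vs_Suc:
  "cs_vs (crun Q Usel Msel a b xi (Suc t)) ! Suc t =
     (let s = crun Q Usel Msel a b xi t
      in b *\<^sub>R proj_out (Msel (cs_vs s @ cs_ps s @ [fst (Q (cs_resp s))])) (xi (Suc t)))"
  by (simp add: Let_def nth_append length_crun)

lemma orthonormal_crun_us:
  assumes Usel: "\<And>L. length L < CARD('d) \<Longrightarrow> norm (Usel L) = 1 \<and> (\<forall>x\<in>set L. x \<bullet> Usel L = 0)"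
    and "2 * t \<le> CARD('d)"
  shows "orthonormal_list (cs_us (crun Q Usel Msel a b xi t) :: (real^'d) list)"
  using assms(2)
proof (induction t)
  case 0
  then show ?case by (simp add: orthonormal_list_def)
next
  case (Suc t)
  let ?s = "crun Q Usel Msel a b xi t"
  let ?L = "cs_us ?s @ cs_ws ?s @ [snd (Q (cs_resp ?s))]"
  have "length ?L < CARD('d)" using Suc.prems by (simp add: length_crun)
  then have "norm (Usel ?L) = 1 \<and> (\<forall>x\<in>set ?L. x \<bullet> Usel ?L = 0)" by (rule Usel)
  then have "orthonormal_list (cs_us ?s @ [Usel ?L])"
    using Suc by (intro orthonormal_list_snoc) auto
  then show ?case by (simp add: Let_def)
qed

text \<open>\<open>M\<^sub>t\<close> only depends on \<open>\<xi>\<^sub>1, \<dots>, \<xi>\<^sub>t\<^sub>-\<^sub>1\<close>, so \<open>v\<^sub>t\<close> is linear in \<open>\<xi>\<^sub>t\<close>.\<close>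
lemma crun_vs_Suc_component_linear:
  assumes "\<And>L. orthonormal_list (Msel L)"
  shows "\<exists>c. norm c \<le> 1 \<and>
    (\<forall>y. cs_vs (crun Q Usel Msel a b (xi(Suc t := y)) (Suc t)) ! Suc t $ l = b * (c \<bullet> y))"
proof -
  let ?s = "crun Q Usel Msel a b xi t"
  define c where "c = proj_out (Msel (cs_vs ?s @ cs_ps ?s @ [fst (Q (cs_resp ?s))])) (axis l 1)"
  have "crun Q Usel Msel a b (xi(Suc t := y)) t = ?s" for y
    by (rule crun_cong) auto
  moreover have "norm c \<le> norm (axis l (1::real))"
    unfolding c_def using assms by (rule norm_proj_out_le)
  ultimately show ?thesis
    by (intro exI[of _ c])
      (simp add: crun_vs_Suc Let_def c_def proj_out_component norm_axis_1 del: crun.simps)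
qed

lemma norm_row_final_A_sq:
  fixes Q :: "((real^'d) \<times> (real^'n)) list \<Rightarrow> (real^'n) \<times> (real^'d)"
    and Msel :: "(real^'n) list \<Rightarrow> (real^'n) list" and xi :: "nat \<Rightarrow> real^'n" and l :: 'n
    and a b :: real
  assumes dim: "CARD('d) \<ge> 2 * T + 2"
    and Usel: "\<And>L. length L < CARD('d) \<Longrightarrow> norm (Usel L) = 1 \<and> (\<forall>x\<in>set L. x \<bullet> Usel L = 0)"
  defines "v j \<equiv> cs_vs (crun Q Usel Msel a b xi j) ! j $ l"
  shows "(norm (row l (final_A Q Out Usel Msel a b T xi :: real^'d^'n)))\<^sup>2 =
     (\<Sum>j<T. (v j - v (Suc j))\<^sup>2) + (v T)\<^sup>2"
proof -
  define s where "s = crun Q Usel Msel a b xi T"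
  define L where "L = cs_us s @ cs_ws s @ [Out (cs_resp s)]"
  define E where "E = cs_us s @ [Usel L]"
  define c where "c j = (if j < T then v j - v (Suc j) else v T)" for j
  have vs: "cs_vs s ! j $ l = v j" if "j \<le> T" for j
    unfolding s_def v_def using that by (rule crun_vs_nth_stable[THEN arg_cong[where f = "\<lambda>x. x $ l"]])
  have "length L < CARD('d)" using dim by (simp add: L_def s_def length_crun)
  then have "norm (Usel L) = 1 \<and> (\<forall>x\<in>set L. x \<bullet> Usel L = 0)" by (rule Usel)
  moreover have "orthonormal_list (cs_us s)"
    unfolding s_def by (rule orthonormal_crun_us[OF Usel add_leD1[OF dim]])
  ultimately have E: "orthonormal_list E" "length E = Suc T"
    by (auto intro!: orthonormal_list_snoc simp: E_def L_def s_def length_crun)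
  have row: "row l M = M $ l" for M :: "real^'d^'n"
    by (simp add: row_def vec_eq_iff)
  have outer: "outer v' u $ l = v' $ l *\<^sub>R u" for v' :: "real^'n" and u :: "real^'d"
    by (simp add: outer_def vec_eq_iff)
  have "(\<Sum>j<T. c j *\<^sub>R E ! j) = (\<Sum>j<T. (v j - v (Suc j)) *\<^sub>R E ! j)"
    by (intro sum.cong) (auto simp: c_def)
  then have "row l (final_A Q Out Usel Msel a b T xi) = (\<Sum>j<Suc T. c j *\<^sub>R E ! j)"
    unfolding final_A_def Let_def Apart_def row sum_component outer
      sum.atLeast1_atMost_eq[where n = T, unfolded One_nat_def[symmetric]]
      s_def[symmetric] L_def[symmetric]
    using length_crun[of Q Usel Msel a b xi T]
    by (simp add: outer c_def E_def vs nth_append flip: s_def)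
  then have "(norm (row l (final_A Q Out Usel Msel a b T xi)))\<^sup>2 = (\<Sum>j<Suc T. (c j)\<^sup>2)"
    by (simp only: norm_sum_orthonormal_list_sq[OF E])
  also have "\<dots> = (\<Sum>j<T. (v j - v (Suc j))\<^sup>2) + (v T)\<^sup>2"
    by (simp add: c_def)
  finally show ?thesis .
qed

lemma measurable_max_norm_row_final_A:
  fixes Q :: "((real^'d) \<times> (real^'n)) list \<Rightarrow> (real^'n) \<times> (real^'d)"
    and Msel :: "(real^'n) list \<Rightarrow> (real^'n) list"
  assumes "CARD('d) \<ge> 2 * T + 2"
    and "\<And>L. length L < CARD('d) \<Longrightarrow> norm (Usel L) = 1 \<and> (\<forall>x\<in>set L. x \<bullet> Usel L = 0)"
    and meas: "\<And>t. t \<in> {1..T} \<Longrightarrow> (\<lambda>xi. cs_vs (crun Q Usel Msel a b xi t) ! t) \<in> borel_measurable M"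
  shows "(\<lambda>xi. MAX l. norm (row l (final_A Q Out Usel Msel a b T xi))) \<in> borel_measurable M"
proof -
  define v where "v l j xi = cs_vs (crun Q Usel Msel a b xi j) ! j $ l" for l j xi
  have v_meas: "v l t \<in> borel_measurable M" if "t \<le> T" for t l
  proof (cases t)
    case 0
    then show ?thesis by (simp add: v_def[abs_def])
  next
    case Suc
    then have "t \<in> {1..T}" using that by simp
    from measurable_compose[OF meas[OF this] borel_measurable_nth] show ?thesis
      by (simp add: v_def[abs_def])
  qed
  have "norm (row l (final_A Q Out Usel Msel a b T xi))
      = sqrt ((\<Sum>j<T. (v l j xi - v l (Suc j) xi)\<^sup>2) + (v l T xi)\<^sup>2)" for l xi
  proof -
    have "norm (row l (final_A Q Out Usel Msel a b T xi))
        = sqrt ((norm (row l (final_A Q Out Usel Msel a b T xi)))\<^sup>2)"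
      by simp
    then show ?thesis
      by (simp only: norm_row_final_A_sq[OF assms(1,2)] v_def)
  qed
  moreover have "(\<lambda>xi. sqrt ((\<Sum>j<T. (v l j xi - v l (Suc j) xi)\<^sup>2) + (v l T xi)\<^sup>2))
      \<in> borel_measurable M" for l
    by (intro measurable_compose[OF _ borel_measurable_sqrt] borel_measurable_add borel_measurable_sum
        borel_measurable_power borel_measurable_diff v_meas) auto
  ultimately have "(\<lambda>xi. norm (row l (final_A Q Out Usel Msel a b T xi))) \<in> borel_measurable M" for l
    by simp
  then show ?thesis by (intro borel_measurable_Max) auto
qed

text \<open>The doubled last term on the left is what lets the induction close.\<close>
lemma sum_sq_diff_le:
  "(\<Sum>j<T. (a j - a (Suc j))\<^sup>2) + 2 * (a T)\<^sup>2 \<le> 2 * (a 0)\<^sup>2 + 4 * (\<Sum>j\<in>{1..T}. (a j :: real)\<^sup>2)"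
proof (induction T)
  case (Suc T)
  have "(a T - a (Suc T))\<^sup>2 \<le> 2 * (a T)\<^sup>2 + 2 * (a (Suc T))\<^sup>2"
    using zero_le_power2[of "a T + a (Suc T)"] by (simp add: power2_eq_square algebra_simps)
  with Suc show ?case by (simp add: atLeastAtMostSuc_conv)
qed simp

lemma max_norm_row_final_A_le_1:
  fixes Q :: "((real^'d) \<times> (real^'n)) list \<Rightarrow> (real^'n) \<times> (real^'d)"
    and Msel :: "(real^'n) list \<Rightarrow> (real^'n) list"
  assumes "CARD('d) \<ge> 2 * T + 2"
    and "\<And>L. length L < CARD('d) \<Longrightarrow> norm (Usel L) = 1 \<and> (\<forall>x\<in>set L. x \<bullet> Usel L = 0)"
    and small: "\<And>t l. t \<in> {1..T} \<Longrightarrow> \<bar>cs_vs (crun Q Usel Msel a b xi t) ! t $ l\<bar> \<le> \<rho>"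
    and "2 * a\<^sup>2 + 4 * real T * \<rho>\<^sup>2 \<le> 1"
  shows "(MAX l. norm (row l (final_A Q Out Usel Msel a b T xi))) \<le> 1"
proof -
  have "norm (row l (final_A Q Out Usel Msel a b T xi)) \<le> 1" for l
  proof -
    define v where "v j = cs_vs (crun Q Usel Msel a b xi j) ! j $ l" for j
    have "(v j)\<^sup>2 \<le> \<rho>\<^sup>2" if "j \<in> {1..T}" for j
      using small[of j l, OF that] abs_le_square_iff[of "v j" \<rho>] by (simp add: v_def)
    then have "4 * (\<Sum>j\<in>{1..T}. (v j)\<^sup>2) \<le> 4 * real T * \<rho>\<^sup>2"
      using sum_bounded_above[of "{1..T}" "\<lambda>j. (v j)\<^sup>2" "\<rho>\<^sup>2"] by simp
    moreover have v0: "v 0 = a" by (simp add: v_def)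
    moreover have "(norm (row l (final_A Q Out Usel Msel a b T xi)))\<^sup>2
        = (\<Sum>j<T. (v j - v (Suc j))\<^sup>2) + (v T)\<^sup>2"
      unfolding v_def by (rule norm_row_final_A_sq[OF assms(1,2)])
    ultimately have "(norm (row l (final_A Q Out Usel Msel a b T xi)))\<^sup>2 \<le> 1"
      using sum_sq_diff_le[of v T, unfolded v0] zero_le_power2[of "v T"] assms(4) by linarith
    then show ?thesis by (simp add: power_le_one_iff)
  qed
  then show ?thesis by simp
qed

section \<open>Tail bounds\<close>

lemma (in prob_space) prob_none_of_events_ge:
  fixes \<epsilon> :: real
  assumes "finite P" "\<And>p. p \<in> P \<Longrightarrow> A p \<in> events" "\<And>p. p \<in> P \<Longrightarrow> prob (A p) \<le> \<epsilon>"
  shows "1 - card P * \<epsilon> \<le> prob (space M - (\<Union>p\<in>P. A p))"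
proof -
  have "prob (\<Union>p\<in>P. A p) \<le> (\<Sum>p\<in>P. prob (A p))"
    using assms by (intro finite_measure_subadditive_finite) auto
  also have "\<dots> \<le> card P * \<epsilon>"
    using assms(3) by (rule sum_bounded_above)
  finally show ?thesis
    using assms by (simp add: prob_compl sets.finite_UN)
qed

lemma PiM_std_gauss_coordinate_linear_tail:
  fixes V :: "('i \<Rightarrow> 'a::euclidean_space) \<Rightarrow> real"
    and I :: "'i set"
  defines "N \<equiv> PiM I (\<lambda>_. std_gauss :: 'a measure)"
  assumes "finite I" "t \<in> I" and [measurable]: "V \<in> borel_measurable N" and "r \<ge> 0"
    and linear: "\<And>x. \<exists>c. norm c \<le> 1 \<and> (\<forall>y. V (x(t := y)) = c \<bullet> y)"
  shows "measure N {x \<in> space N. r \<le> \<bar>V x\<bar>} \<le> 2 * exp (- r\<^sup>2 / 2)"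
proof -
  let ?G = "std_gauss :: 'a measure"
  interpret G: prob_space ?G by (rule prob_space_std_gauss)
  interpret product_sigma_finite "\<lambda>_::'i. ?G"
    by (simp add: product_sigma_finite_def G.sigma_finite_measure_axioms)
  interpret N: prob_space N unfolding N_def by (intro prob_space_PiM prob_space_std_gauss)
  define J where "J = I - {t}"
  have I: "I = insert t J" "finite J" "t \<notin> J" using assms by (auto simp: J_def)
  interpret J: prob_space "PiM J (\<lambda>_. ?G)" by (intro prob_space_PiM prob_space_std_gauss)
  define B where "B = {x \<in> space N. r \<le> \<bar>V x\<bar>}"
  have B: "B \<in> sets N" unfolding B_def by measurable
  have "emeasure N B = (\<integral>\<^sup>+ x. indicator B x \<partial>N)"
    using B by simp
  also have "\<dots> = (\<integral>\<^sup>+ x. \<integral>\<^sup>+ y. indicator B (x(t := y)) \<partial>?G \<partial>PiM J (\<lambda>_. ?G))"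
    using borel_measurable_indicator[OF B] unfolding N_def I(1)
    by (rule product_nn_integral_insert[OF I(2,3)])
  also have "\<dots> \<le> (\<integral>\<^sup>+ x. 2 * exp (- r\<^sup>2 / 2) \<partial>PiM J (\<lambda>_. ?G))"
  proof (intro nn_integral_mono)
    fix x assume x: "x \<in> space (PiM J (\<lambda>_. ?G))"
    obtain c where c: "norm c \<le> 1" "\<And>y. V (x(t := y)) = c \<bullet> y" using linear by blast
    have "x(t := y) \<in> space N" for y
      using x unfolding N_def I(1) by (simp add: space_PiM PiE_fun_upd)
    then have "indicator B (x(t := y)) = (indicator {y. r \<le> \<bar>c \<bullet> y\<bar>} y :: ennreal)" for y
      by (simp add: B_def c(2) indicator_def)
    then have "(\<integral>\<^sup>+ y. indicator B (x(t := y)) \<partial>?G) = (\<integral>\<^sup>+ y. indicator {y. r \<le> \<bar>c \<bullet> y\<bar>} y \<partial>?G)"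
      by simp
    also have "\<dots> = emeasure ?G {y. r \<le> \<bar>c \<bullet> y\<bar>}"
      by (rule nn_integral_indicator) simp
    also have "\<dots> \<le> 2 * exp (- r\<^sup>2 / 2)"
      using c(1) assms(5) by (rule std_gauss_abs_inner_tail)
    finally show "(\<integral>\<^sup>+ y. indicator B (x(t := y)) \<partial>?G) \<le> ennreal (2 * exp (- r\<^sup>2 / 2))" .
  qed
  also have "\<dots> = 2 * exp (- r\<^sup>2 / 2)"
    by (simp add: J.emeasure_space_1)
  finally show ?thesis
    by (simp add: B_def N.emeasure_eq_measure)
qed

lemma crun_vs_component_tail:
  fixes Q :: "((real^'d) \<times> (real^'n)) list \<Rightarrow> (real^'n) \<times> (real^'d)"
    and Msel :: "(real^'n) list \<Rightarrow> (real^'n) list" and l :: 'n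
    and T t :: nat and a b r :: real
  defines "N \<equiv> PiM {1..T} (\<lambda>_. std_gauss :: (real^'n) measure)"
  assumes Msel: "\<And>L. orthonormal_list (Msel L)" and t: "t \<in> {1..T}"
    and meas: "(\<lambda>xi. cs_vs (crun Q Usel Msel a b xi t) ! t) \<in> borel_measurable N"
    and b: "b > 0" and "r \<ge> 0"
  defines "E \<equiv> {xi \<in> space N. b * r \<le> \<bar>cs_vs (crun Q Usel Msel a b xi t) ! t $ l\<bar>}"
  shows "E \<in> sets N" and "measure N E \<le> 2 * exp (- r\<^sup>2 / 2)"
proof -
  obtain t' where t': "t = Suc t'" using t by (cases t) auto
  define V where "V xi = cs_vs (crun Q Usel Msel a b xi t) ! t $ l / b" for xi
  from measurable_compose[OF meas borel_measurable_nth]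
  have V_meas [measurable]: "V \<in> borel_measurable N"
    unfolding V_def[abs_def] by (rule borel_measurable_divide) simp
  have E: "E = {xi \<in> space N. r \<le> \<bar>V xi\<bar>}"
    using b by (auto simp: E_def V_def abs_divide abs_of_pos le_divide_eq mult.commute)
  show "E \<in> sets N" unfolding E by measurable
  have "\<exists>c. norm c \<le> 1 \<and> (\<forall>y. V (xi(t := y)) = c \<bullet> y)" for xi
  proof -
    from crun_vs_Suc_component_linear[where Msel = Msel and Q = Q and Usel = Usel and a = a
        and b = b and xi = xi and t = t' and l = l, OF Msel]
    obtain c where "norm c \<le> 1"
        "\<And>y. cs_vs (crun Q Usel Msel a b (xi(t := y)) t) ! t $ l = b * (c \<bullet> y)"
      unfolding t' by blast
    then show ?thesis using b by (intro exI[of _ c]) (simp add: V_def)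
  qed
  then show "measure N E \<le> 2 * exp (- r\<^sup>2 / 2)"
    unfolding E N_def using t assms(6) V_meas[unfolded N_def]
    by (intro PiM_std_gauss_coordinate_linear_tail) auto
qed

lemma prob_crun_vs_components_small:
  fixes Q :: "((real^'d) \<times> (real^'n)) list \<Rightarrow> (real^'n) \<times> (real^'d)"
    and Msel :: "(real^'n) list \<Rightarrow> (real^'n) list" and T :: nat and a b r :: real
  defines "N \<equiv> PiM {1..T} (\<lambda>_. std_gauss :: (real^'n) measure)"
  assumes Msel: "\<And>L. orthonormal_list (Msel L)"
    and meas: "\<And>t. t \<in> {1..T} \<Longrightarrow> (\<lambda>xi. cs_vs (crun Q Usel Msel a b xi t) ! t) \<in> borel_measurable N"
    and "b > 0" "r \<ge> 0"
  shows "1 - real T * real CARD('n) * (2 * exp (- r\<^sup>2 / 2)) \<le> measure N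
    {xi \<in> space N. \<forall>t\<in>{1..T}. \<forall>l. \<bar>cs_vs (crun Q Usel Msel a b xi t) ! t $ l\<bar> < b * r}"
proof -
  let ?P = "{1..T} \<times> (UNIV :: 'n set)"
  interpret N: prob_space N unfolding N_def by (intro prob_space_PiM prob_space_std_gauss)
  define B where
    "B p = {xi \<in> space N. b * r \<le> \<bar>cs_vs (crun Q Usel Msel a b xi (fst p)) ! fst p $ snd p\<bar>}"
    for p
  have "B p \<in> N.events \<and> N.prob (B p) \<le> 2 * exp (- r\<^sup>2 / 2)" if "p \<in> ?P" for p
  proof -
    have t: "fst p \<in> {1..T}" using that by auto
    show ?thesis
      using crun_vs_component_tail[where Msel = Msel and T = T and t = "fst p" and Q = Q
          and Usel = Usel and a = a and b = b and r = r and l = "snd p",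
          OF Msel t meas[OF t, unfolded N_def] assms(4,5)]
      unfolding B_def N_def by blast
  qed
  then have "1 - card ?P * (2 * exp (- r\<^sup>2 / 2)) \<le> N.prob (space N - (\<Union>p\<in>?P. B p))"
    by (intro N.prob_none_of_events_ge) auto
  also have "space N - (\<Union>p\<in>?P. B p)
      = {xi \<in> space N. \<forall>t\<in>{1..T}. \<forall>l. \<bar>cs_vs (crun Q Usel Msel a b xi t) ! t $ l\<bar> < b * r}"
    by (auto simp: B_def not_le) (meson atLeastAtMost_iff not_le)
  finally show ?thesis
    by (simp add: card_cartesian_product)
qed

theorem mainTheorem4:
  fixes T :: nat and \<alpha> \<beta> \<delta> :: real
    and Q :: "((real^'d) \<times> (real^'n)) list \<Rightarrow> (real^'n) \<times> (real^'d)"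
    and Out :: "((real^'d) \<times> (real^'n)) list \<Rightarrow> real^'d"
    and Usel :: "(real^'d) list \<Rightarrow> real^'d"
    and Msel :: "(real^'n) list \<Rightarrow> (real^'n) list"
  assumes "T \<ge> 1" and "CARD('n) \<ge> 2 * T + 1" and "CARD('d) \<ge> 2 * T + 2"
    and "\<alpha> > 0" and "\<beta> > 0"
    and Usel: "\<And>L. length L < CARD('d) \<Longrightarrow>
                 norm (Usel L) = 1 \<and> (\<forall>x\<in>set L. x \<bullet> Usel L = 0)"
    and Msel: "\<And>L. orthonormal_list (Msel L) \<and> span (set (Msel L)) = span (set L)"
    and meas: "\<And>t. t \<in> {1..T} \<Longrightarrow>
                 (\<lambda>xi. cs_vs (crun Q Usel Msel \<alpha> \<beta> xi t) ! t)
                   \<in> borel_measurable (PiM {1..T} (\<lambda>_. std_gauss :: (real^'n) measure))"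
    and "0 < \<delta>" and "\<delta> < 1"
    and "2 * \<alpha>\<^sup>2 + 8 * real T * ln (2 * real T * real CARD('n) / \<delta>) * \<beta>\<^sup>2 \<le> 1"
  shows "measure (PiM {1..T} (\<lambda>_. std_gauss :: (real^'n) measure))
           {xi \<in> space (PiM {1..T} (\<lambda>_. std_gauss :: (real^'n) measure)).
              (MAX l. norm (row l (final_A Q Out Usel Msel \<alpha> \<beta> T xi))) \<le> 1}
         \<ge> 1 - \<delta>"
proof -
  let ?N = "PiM {1..T} (\<lambda>_. std_gauss :: (real^'n) measure)"
  interpret N: prob_space ?N by (intro prob_space_PiM prob_space_std_gauss)
  define K where "K = 2 * real T * real CARD('n) / \<delta>"
  define r where "r = sqrt (2 * ln K)"
  have "1 \<le> real T * real CARD('n)"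
    using assms(1,2) mult_mono[of 1 "real T" 1 "real CARD('n)"] by simp
  then have "1 < K" using assms(9,10) by (simp add: K_def field_simps)
  then have r: "r \<ge> 0" "r\<^sup>2 = 2 * ln K" "real T * real CARD('n) * (2 * exp (- r\<^sup>2 / 2)) = \<delta>"
    using assms(1) by (simp_all add: r_def K_def exp_minus field_simps)
  have "\<And>L. orthonormal_list (Msel L)" using Msel by blast
  then have "1 - \<delta> \<le> N.prob
      {xi \<in> space ?N. \<forall>t\<in>{1..T}. \<forall>l. \<bar>cs_vs (crun Q Usel Msel \<alpha> \<beta> xi t) ! t $ l\<bar> < \<beta> * r}"
    using meas assms(5) r(1) unfolding r(3)[symmetric] by (rule prob_crun_vs_components_small)
  also have "\<dots> \<le> N.prob {xi \<in> space ?N. (MAX l. norm (row l (final_A Q Out Usel Msel \<alpha> \<beta> T xi))) \<le> 1}"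
  proof (intro N.finite_measure_mono subsetI)
    have budget: "2 * \<alpha>\<^sup>2 + 4 * real T * (\<beta> * r)\<^sup>2 \<le> 1"
      using assms(11) r(2) by (simp add: K_def power_mult_distrib mult_ac)
    fix xi
    assume xi: "xi \<in> {xi \<in> space ?N. \<forall>t\<in>{1..T}. \<forall>l. \<bar>cs_vs (crun Q Usel Msel \<alpha> \<beta> xi t) ! t $ l\<bar> < \<beta> * r}"
    then have small: "\<bar>cs_vs (crun Q Usel Msel \<alpha> \<beta> xi t) ! t $ l\<bar> \<le> \<beta> * r"
      if "t \<in> {1..T}" for t l
      using that by (simp add: less_imp_le)
    have "(MAX l. norm (row l (final_A Q Out Usel Msel \<alpha> \<beta> T xi))) \<le> 1"
      using assms(3) Usel small budget by (rule max_norm_row_final_A_le_1)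
    with xi show "xi \<in> {xi \<in> space ?N. (MAX l. norm (row l (final_A Q Out Usel Msel \<alpha> \<beta> T xi))) \<le> 1}"
      by simp
  next
    have [measurable]: "(\<lambda>xi. MAX l. norm (row l (final_A Q Out Usel Msel \<alpha> \<beta> T xi))) \<in> borel_measurable ?N"
      using assms(3) Usel meas by (rule measurable_max_norm_row_final_A)
    show "{xi \<in> space ?N. (MAX l. norm (row l (final_A Q Out Usel Msel \<alpha> \<beta> T xi))) \<le> 1} \<in> N.events"
      by measurable
  qed
  finally show ?thesis .
qed

end
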